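(* Let $n_d>2$ be an odd integer, $\mu=\frac{n_d-1}{2}$, and $\delta\in(0,1/n_d]$. Let $\varepsilon^*\ge0$ be the unique non-negative real with $\delta\sum_{x=0}^{n_d-1}e^{\varepsilon^*(\mu-|x-\mu|)}=1$. Then the distribution $P^*$ on $\{0,\dots,n_d-1\}$ given by $P^*(x)=\delta e^{\varepsilon^*(\mu-|x-\mu|)}$ (a truncated discrete Laplace distribution $P^*(x)=A e^{-\varepsilon^*|x-\mu|}$ with normalizing constant $A$) satisfies $H_{\varepsilon^*}(P^*\|P^*_+)\le\delta$ and $H_{\varepsilon^*}(P^*_+\|P^* )\le\delta$; every distribution $X$ on $\{0,\dots,n_d-1\}$ with $H_{\varepsilon}(X\|X_+)\le\delta$ and $H_{\varepsilon}(X_+\|X)\le\delta$ has $\varepsilon\ge\varepsilon^*$; and $P^*$ is the unique distribution on $\{0,\dots,n_d-1\}$ achieving this with $\varepsilon=\varepsilon^*$. Furthermore, when $\delta\in(1/n_d,1]$, the minimum such $\varepsilon$ is $0$, attained by the uniform distribution on $\{0,\dots,n_d-1\}$.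
   Context: For a distribution $X$ on $\mathbb{Z}$, $X_+$ is its shift by one, $X_+(x)=X(x-1)$. The hockey-stick divergence is $H_\varepsilon(P\|Q)=\sum_x[P(x)-e^\varepsilon Q(x)]_+$, where $[t]_+=\max\{t,0\}$. The additive noise mechanism with noise $X$ (release $n+Z$, $Z\sim X$) is $(\varepsilon,\delta)$-DP for neighboring counts differing by one iff $H_\varepsilon(X\|X_+)\le\delta$ and $H_\varepsilon(X_+\|X)\le\delta$. *)

theory Defs
  imports "HOL-Analysis.Analysis"
begin

definition shift_dist :: "(int \<Rightarrow> real) \<Rightarrow> int \<Rightarrow> real" where
  "shift_dist X = (\<lambda>x. X (x - 1))"

definition hockey_stick :: "real \<Rightarrow> (int \<Rightarrow> real) \<Rightarrow> (int \<Rightarrow> real) \<Rightarrow> real" where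
  "hockey_stick eps P Q = (\<Sum>\<^sub>\<infinity>x\<in>UNIV. max 0 (P x - exp eps * Q x))"

definition dist_on :: "nat \<Rightarrow> (int \<Rightarrow> real) \<Rightarrow> bool" where
  "dist_on n X \<longleftrightarrow> (\<forall>x. 0 \<le> X x) \<and> (\<forall>x. x \<notin> {0..int n - 1} \<longrightarrow> X x = 0)
     \<and> (\<Sum>x\<in>{0..int n - 1}. X x) = 1"

text \<open>The additive noise mechanism with noise X is (eps,delta)-DP for neighbouring counts.\<close>
definition noise_dp :: "real \<Rightarrow> real \<Rightarrow> (int \<Rightarrow> real) \<Rightarrow> bool" where
  "noise_dp eps delta X \<longleftrightarrow>
     hockey_stick eps X (shift_dist X) \<le> delta \<and> hockey_stick eps (shift_dist X) X \<le> delta"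

end

theory Submission
  imports Defs
begin

(* Let w(x) = min(x, n-1-x) be the distance of x to the ends of {0..n-1}, so that P* = delta e^(eps* w).
   For X supported on {0..n-1}, X(k+1) <= e^eps X(k) + [X(k+1) - e^eps X(k)]_+; unrolling from X(-1) = 0
   gives X(k) <= e^(eps k) H_eps(X||X_+), and the reflection x -> n-1-x turns this into
   X(k) <= e^(eps (n-1-k)) H_eps(X_+||X). So (eps,delta)-DP forces X <= delta e^(eps w) pointwise, and
   summing, 1 <= delta * sum_x e^(eps w(x)). This sum is continuous and strictly increasing in eps, which
   gives eps >= eps*, and at eps = eps* the pointwise bound is tight, so X = P*. Conversely P* grows by a
   factor at most e^eps* per step, so each of its hockey-stick divergences is the single boundary term
   P*(0) = delta. *)

definition tent :: "nat \<Rightarrow> int \<Rightarrow> real" where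
  "tent n x = (real n - 1) / 2 - \<bar>real_of_int x - (real n - 1) / 2\<bar>"

definition tent_mass :: "nat \<Rightarrow> real \<Rightarrow> real" where
  "tent_mass n e = (\<Sum>x\<in>{0..int n - 1}. exp (e * tent n x))"

definition trunc_laplace :: "nat \<Rightarrow> real \<Rightarrow> real \<Rightarrow> int \<Rightarrow> real" where
  "trunc_laplace n d e = (\<lambda>x. if x \<in> {0..int n - 1} then d * exp (e * tent n x) else 0)"

lemma tent_eq_min: "tent n x = min (real_of_int x) (real n - 1 - real_of_int x)"
  unfolding tent_def by (simp add: abs_if min_def field_simps)

lemma tent_nonneg: "x \<in> {0..int n - 1} \<Longrightarrow> 0 \<le> tent n x"
  unfolding tent_eq_min by auto

lemma tent_zero: "tent n 0 = 0" if "1 \<le> n"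
  using that unfolding tent_eq_min by simp

lemma tent_one: "tent n 1 = 1" if "3 \<le> n"
  using that unfolding tent_eq_min by simp

lemma tent_le_pred_plus_one: "tent n x \<le> tent n (x - 1) + 1"
  unfolding tent_eq_min by auto

lemma tent_reflect: "tent n (int n - 1 - x) = tent n x"
  unfolding tent_eq_min by auto

lemma tent_mass_zero: "tent_mass n 0 = real n"
  unfolding tent_mass_def by simp

lemma strict_mono_tent_mass:
  assumes "3 \<le> n"
  shows "strict_mono (tent_mass n)"
proof (rule strict_monoI)
  fix e e' :: real assume "e < e'"
  show "tent_mass n e < tent_mass n e'"
    unfolding tent_mass_def
  proof (rule sum_strict_mono_ex1)
    show "\<forall>x\<in>{0..int n - 1}. exp (e * tent n x) \<le> exp (e' * tent n x)"
      using \<open>e < e'\<close> by (auto intro: mult_right_mono tent_nonneg)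
    show "\<exists>x\<in>{0..int n - 1}. exp (e * tent n x) < exp (e' * tent n x)"
      using assms \<open>e < e'\<close> by (intro bexI[of _ 1]) (auto simp: tent_one)
  qed simp
qed

lemma exp_le_tent_mass:
  assumes "3 \<le> n"
  shows "exp e \<le> tent_mass n e"
proof -
  have "exp (e * tent n 1) \<le> tent_mass n e"
    unfolding tent_mass_def by (rule member_le_sum) (use assms in auto)
  then show ?thesis
    using assms by (simp add: tent_one)
qed

lemma ex1_tent_mass_root:
  assumes "3 \<le> n" "0 < d" "d \<le> 1 / real n"
  shows "\<exists>!e. 0 \<le> e \<and> d * tent_mass n e = 1"
proof -
  have at_zero: "d * tent_mass n 0 \<le> 1"
    using assms by (simp add: tent_mass_zero field_simps)
  have "d * (1 + 1 / d) \<le> d * tent_mass n (1 / d)"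
    using order_trans[OF exp_ge_add_one_self exp_le_tent_mass[OF assms(1)]] assms(2)
    by (intro mult_left_mono) auto
  moreover have "d * (1 + 1 / d) = d + 1"
    using assms(2) by (simp add: field_simps)
  ultimately have at_inv: "1 \<le> d * tent_mass n (1 / d)"
    using assms(2) by linarith
  have "\<forall>e. 0 \<le> e \<and> e \<le> 1 / d \<longrightarrow> isCont (\<lambda>e. d * tent_mass n e) e"
    unfolding tent_mass_def by (intro allI impI continuous_intros)
  then obtain e where "0 \<le> e" "d * tent_mass n e = 1"
    using IVT[of "\<lambda>e. d * tent_mass n e", OF at_zero at_inv] assms(2) by auto
  moreover have "e' = e" if "d * tent_mass n e' = 1" for e'
  proof -
    have "d * tent_mass n e' = d * tent_mass n e"
      using \<open>d * tent_mass n e = 1\<close> that by simp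
    then have "tent_mass n e' = tent_mass n e"
      using assms(2) by simp
    then show ?thesis
      using strict_mono_eq[OF strict_mono_tent_mass[OF assms(1)]] by blast
  qed
  ultimately show ?thesis by blast
qed

lemma trunc_laplace_reflect: "trunc_laplace n d e (int n - 1 - x) = trunc_laplace n d e x"
  unfolding trunc_laplace_def by (auto simp: tent_reflect)

lemma sum_trunc_laplace: "(\<Sum>x\<in>{0..int n - 1}. trunc_laplace n d e x) = d * tent_mass n e"
  unfolding trunc_laplace_def tent_mass_def by (simp add: sum_distrib_left)

lemma dist_on_trunc_laplace:
  assumes "0 \<le> d" "d * tent_mass n e = 1"
  shows "dist_on n (trunc_laplace n d e)"
  using assms sum_trunc_laplace[of n d e] unfolding dist_on_def by (auto simp: trunc_laplace_def)

lemma hockey_stick_eq_sum: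
  assumes "finite S" "\<And>x. x \<notin> S \<Longrightarrow> P x = 0" "\<And>x. x \<notin> S \<Longrightarrow> Q x = 0"
  shows "hockey_stick e P Q = (\<Sum>x\<in>S. max 0 (P x - exp e * Q x))"
proof -
  have "hockey_stick e P Q = (\<Sum>\<^sub>\<infinity>x\<in>S. max 0 (P x - exp e * Q x))"
    unfolding hockey_stick_def by (rule infsum_cong_neutral) (use assms in auto)
  then show ?thesis
    using assms(1) by simp
qed

lemma hockey_stick_shift_reflect:
  "hockey_stick e (shift_dist X) X
     = hockey_stick e (\<lambda>y. X (c - y)) (shift_dist (\<lambda>y. X (c - y)))"
proof -
  have "bij_betw (\<lambda>y. c + 1 - y) UNIV UNIV"
    by (rule bij_betwI[of _ _ _ "\<lambda>x. c + 1 - x"]) auto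
  from infsum_reindex_bij_betw[OF this, of "\<lambda>x. max 0 (X (x - 1) - exp e * X x)"]
  show ?thesis
    unfolding hockey_stick_def shift_dist_def by (simp add: algebra_simps)
qed

lemma le_exp_mul_partial_hockey_stick:
  fixes X :: "int \<Rightarrow> real"
  assumes "\<And>x. x < 0 \<Longrightarrow> X x = 0" "0 \<le> e" "0 \<le> k"
  shows "X k \<le> exp (e * k) * (\<Sum>x\<in>{0..k}. max 0 (X x - exp e * X (x - 1)))"
  using \<open>0 \<le> k\<close>
proof (induction k rule: int_ge_induct)
  case base
  then show ?case
    using assms(1)[of "-1"] by simp
next
  case (step k)
  define S where "S = (\<Sum>x\<in>{0..k}. max 0 (X x - exp e * X (x - 1)))"
  define t where "t = max 0 (X (k + 1) - exp e * X k)"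
  have "{0..k + 1} = insert (k + 1) {0..k}"
    using step.hyps by auto
  then have sum_eq: "(\<Sum>x\<in>{0..k + 1}. max 0 (X x - exp e * X (x - 1))) = t + S"
    unfolding S_def t_def by simp
  have "X (k + 1) \<le> exp e * X k + t"
    unfolding t_def by simp
  also have "\<dots> \<le> exp e * (exp (e * k) * S) + t"
    using step.IH unfolding S_def by (intro add_right_mono mult_left_mono) auto
  also have "\<dots> = exp (e * (k + 1)) * S + t"
    by (simp add: distrib_left exp_add[symmetric] algebra_simps)
  also have "\<dots> \<le> exp (e * (k + 1)) * S + exp (e * (k + 1)) * t"
    using assms(2) step.hyps by (intro add_left_mono) (simp add: t_def mult_le_cancel_right1)
  finally show ?case
    unfolding sum_eq by (simp add: algebra_simps)
qed

lemma le_exp_mul_hockey_stick_shift: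
  fixes X :: "int \<Rightarrow> real"
  assumes support: "\<And>x. x \<notin> {0..N} \<Longrightarrow> X x = 0" and "0 \<le> e" "0 \<le> k"
  shows "X k \<le> exp (e * k) * hockey_stick e X (shift_dist X)"
proof -
  define M where "M = max k (N + 1)"
  have "X k \<le> exp (e * k) * (\<Sum>x\<in>{0..k}. max 0 (X x - exp e * X (x - 1)))"
    by (rule le_exp_mul_partial_hockey_stick) (use assms in auto)
  also have "\<dots> \<le> exp (e * k) * (\<Sum>x\<in>{0..M}. max 0 (X x - exp e * X (x - 1)))"
    by (intro mult_left_mono sum_mono2) (auto simp: M_def)
  also have "(\<Sum>x\<in>{0..M}. max 0 (X x - exp e * X (x - 1))) = hockey_stick e X (shift_dist X)"
    unfolding shift_dist_def by (rule hockey_stick_eq_sum[symmetric]) (auto simp: M_def intro!: support)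
  finally show ?thesis .
qed

lemma hockey_stick_shift_eq_at_zero:
  fixes X :: "int \<Rightarrow> real"
  assumes "0 \<le> X 0" "X (-1) = 0" "\<And>x. x \<noteq> 0 \<Longrightarrow> X x \<le> exp e * X (x - 1)"
  shows "hockey_stick e X (shift_dist X) = X 0"
proof -
  have "hockey_stick e X (shift_dist X) = (\<Sum>\<^sub>\<infinity>x\<in>{0}. max 0 (X x - exp e * X (x - 1)))"
    unfolding hockey_stick_def shift_dist_def
    by (rule infsum_cong_neutral) (auto intro!: max_absorb1 simp: assms(3))
  then show ?thesis
    using assms(1,2) by simp
qed

lemma noise_dp_mono: "noise_dp e d X \<Longrightarrow> d \<le> d' \<Longrightarrow> noise_dp e d' X"
  unfolding noise_dp_def by auto

lemma noise_dp_le_trunc_laplace: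
  assumes "dist_on n X" "noise_dp e d X" "0 \<le> e"
  shows "X x \<le> trunc_laplace n d e x"
proof (cases "x \<in> {0..int n - 1}")
  case False
  then show ?thesis
    using assms(1) unfolding dist_on_def trunc_laplace_def by auto
next
  case True
  have support: "\<And>x. x \<notin> {0..int n - 1} \<Longrightarrow> X x = 0"
    using assms(1) unfolding dist_on_def by auto
  have "X x \<le> exp (e * x) * hockey_stick e X (shift_dist X)"
    using le_exp_mul_hockey_stick_shift[where N = "int n - 1" and k = x] support assms(3) True by simp
  also have "\<dots> \<le> exp (e * x) * d"
    using assms(2) unfolding noise_dp_def by simp
  finally have left: "X x \<le> d * exp (e * x)"
    by (simp add: mult.commute)
  define Y where "Y = (\<lambda>y. X (int n - 1 - y))"
  have Y_support: "\<And>y. y \<notin> {0..int n - 1} \<Longrightarrow> Y y = 0"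
    unfolding Y_def by (rule support) auto
  have "X x = Y (int n - 1 - x)"
    unfolding Y_def by simp
  also have "\<dots> \<le> exp (e * real_of_int (int n - 1 - x)) * hockey_stick e Y (shift_dist Y)"
    by (rule le_exp_mul_hockey_stick_shift[where X = Y and N = "int n - 1", OF Y_support assms(3)])
      (use True in auto)
  also have "\<dots> = exp (e * real_of_int (int n - 1 - x)) * hockey_stick e (shift_dist X) X"
    unfolding Y_def by (simp add: hockey_stick_shift_reflect[of e X "int n - 1"])
  also have "\<dots> \<le> exp (e * real_of_int (int n - 1 - x)) * d"
    using assms(2) unfolding noise_dp_def by simp
  finally have right: "X x \<le> d * exp (e * (real n - 1 - x))"
    by (simp add: mult.commute)
  show ?thesis
    using left right True unfolding trunc_laplace_def tent_eq_min by (simp add: min_def)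
qed

lemma noise_dp_trunc_laplace:
  assumes "0 \<le> d" "0 \<le> e" "1 \<le> n"
  shows "noise_dp e d (trunc_laplace n d e)"
proof -
  let ?P = "trunc_laplace n d e"
  have step: "?P x \<le> exp e * ?P (x - 1)" if "x \<noteq> 0" for x
  proof (cases "x \<in> {0..int n - 1}")
    case True
    with that have "x - 1 \<in> {0..int n - 1}"
      by auto
    have "exp (e * tent n x) \<le> exp (e * (tent n (x - 1) + 1))"
      using tent_le_pred_plus_one[of n x] assms(2) by (simp add: mult_left_mono)
    then show ?thesis
      using True \<open>x - 1 \<in> {0..int n - 1}\<close> assms(1)
      by (simp add: trunc_laplace_def distrib_left exp_add mult_left_mono algebra_simps)
  next
    case False
    then show ?thesis
      using that assms(1) by (auto simp: trunc_laplace_def)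
  qed
  have forward: "hockey_stick e ?P (shift_dist ?P) = d"
    using hockey_stick_shift_eq_at_zero[of ?P e] step assms
    by (simp add: trunc_laplace_def tent_zero)
  have "(\<lambda>y. ?P (int n - 1 - y)) = ?P"
    by (simp add: trunc_laplace_reflect)
  then have "hockey_stick e (shift_dist ?P) ?P = hockey_stick e ?P (shift_dist ?P)"
    using hockey_stick_shift_reflect[of e ?P "int n - 1"] by simp
  then show ?thesis
    using forward unfolding noise_dp_def by simp
qed

lemma noise_dp_imp_tent_mass_ge:
  assumes "dist_on n X" "noise_dp e d X" "0 \<le> e"
  shows "1 \<le> d * tent_mass n e"
proof -
  have "1 = (\<Sum>x\<in>{0..int n - 1}. X x)"
    using assms(1) unfolding dist_on_def by simp
  also have "\<dots> \<le> (\<Sum>x\<in>{0..int n - 1}. trunc_laplace n d e x)"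
    by (intro sum_mono noise_dp_le_trunc_laplace[OF assms])
  finally show ?thesis
    by (simp add: sum_trunc_laplace)
qed

lemma noise_dp_epsilon_lower_bound:
  assumes "3 \<le> n" "0 < d" "d * tent_mass n e\<^sub>0 = 1"
    and "dist_on n X" "noise_dp e d X" "0 \<le> e"
  shows "e\<^sub>0 \<le> e"
proof -
  have "d * tent_mass n e\<^sub>0 \<le> d * tent_mass n e"
    using noise_dp_imp_tent_mass_ge[OF assms(4-6)] assms(3) by simp
  then have "tent_mass n e\<^sub>0 \<le> tent_mass n e"
    using assms(2) by simp
  then show ?thesis
    using strict_mono_less_eq[OF strict_mono_tent_mass[OF assms(1)]] by blast
qed

lemma noise_dp_eq_trunc_laplace:
  assumes "dist_on n X" "noise_dp e d X" "0 \<le> e" "d * tent_mass n e = 1"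
  shows "X = trunc_laplace n d e"
proof
  fix x
  show "X x = trunc_laplace n d e x"
  proof (cases "x \<in> {0..int n - 1}")
    case True
    have "(\<Sum>x\<in>{0..int n - 1}. X x) = (\<Sum>x\<in>{0..int n - 1}. trunc_laplace n d e x)"
      using assms(1,4) unfolding dist_on_def by (simp add: sum_trunc_laplace)
    then show ?thesis
      using noise_dp_le_trunc_laplace[OF assms(1-3)] True by (rule sum_mono_inv) simp
  next
    case False
    then show ?thesis
      using assms(1) unfolding dist_on_def trunc_laplace_def by auto
  qed
qed

lemma trunc_laplace_optimal:
  assumes "3 \<le> n" "0 < d" "0 \<le> e\<^sub>0" "d * tent_mass n e\<^sub>0 = 1"
  shows "dist_on n (trunc_laplace n d e\<^sub>0) \<and> noise_dp e\<^sub>0 d (trunc_laplace n d e\<^sub>0)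
    \<and> (\<forall>X e. 0 \<le> e \<and> dist_on n X \<and> noise_dp e d X \<longrightarrow> e\<^sub>0 \<le> e)
    \<and> (\<forall>X. dist_on n X \<and> noise_dp e\<^sub>0 d X \<longrightarrow> X = trunc_laplace n d e\<^sub>0)"
proof (intro conjI allI impI; (elim conjE)?)
  show "dist_on n (trunc_laplace n d e\<^sub>0)"
    using assms by (intro dist_on_trunc_laplace) auto
  show "noise_dp e\<^sub>0 d (trunc_laplace n d e\<^sub>0)"
    using assms by (intro noise_dp_trunc_laplace) auto
  show "e\<^sub>0 \<le> e" if "0 \<le> e" "dist_on n X" "noise_dp e d X" for X e
    using noise_dp_epsilon_lower_bound[OF assms(1,2,4) that(2,3,1)] .
  show "X = trunc_laplace n d e\<^sub>0" if "dist_on n X" "noise_dp e\<^sub>0 d X" for X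
    using noise_dp_eq_trunc_laplace[OF that assms(3,4)] .
qed

theorem mainTheorem14:
  fixes n :: nat and \<delta> :: real
  assumes "odd n" and "n > 2"
  defines "\<mu> \<equiv> (real n - 1) / 2"
  shows "(0 < \<delta> \<and> \<delta> \<le> 1 / real n \<longrightarrow>
           (\<exists>!e::real. 0 \<le> e \<and> \<delta> * (\<Sum>x\<in>{0..int n - 1}. exp (e * (\<mu> - \<bar>real_of_int x - \<mu>\<bar>))) = 1)
         \<and> (\<forall>es::real. 0 \<le> es \<and> \<delta> * (\<Sum>x\<in>{0..int n - 1}. exp (es * (\<mu> - \<bar>real_of_int x - \<mu>\<bar>))) = 1 \<longrightarrow>
              (let P = (\<lambda>x::int. if x \<in> {0..int n - 1}
                                 then \<delta> * exp (es * (\<mu> - \<bar>real_of_int x - \<mu>\<bar>)) else 0)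
               in dist_on n P \<and> noise_dp es \<delta> P
                  \<and> (\<forall>X e. 0 \<le> e \<and> dist_on n X \<and> noise_dp e \<delta> X \<longrightarrow> es \<le> e)
                  \<and> (\<forall>X. dist_on n X \<and> noise_dp es \<delta> X \<longrightarrow> X = P))))
       \<and> (1 / real n < \<delta> \<and> \<delta> \<le> 1 \<longrightarrow>
           (let U = (\<lambda>x::int. if x \<in> {0..int n - 1} then 1 / real n else 0)
            in dist_on n U \<and> noise_dp 0 \<delta> U))"
proof -
  have n: "3 \<le> n"
    using assms(2) by simp
  have tent: "\<mu> - \<bar>real_of_int x - \<mu>\<bar> = tent n x" for x
    unfolding \<mu>_def tent_def ..
  have uniform: "(\<lambda>x. if x \<in> {0..int n - 1} then 1 / real n else 0) = trunc_laplace n (1 / real n) 0"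
    by (simp add: trunc_laplace_def fun_eq_iff)
  have "dist_on n (trunc_laplace n (1 / real n) 0)"
    using n by (intro dist_on_trunc_laplace) (auto simp: tent_mass_zero)
  moreover have "noise_dp 0 \<delta> (trunc_laplace n (1 / real n) 0)" if "1 / real n < \<delta>"
    using noise_dp_trunc_laplace[of "1 / real n" 0 n] n that by (auto intro: noise_dp_mono)
  ultimately show ?thesis
    unfolding tent Let_def tent_mass_def[symmetric] trunc_laplace_def[symmetric] uniform
    using ex1_tent_mass_root[OF n] trunc_laplace_optimal[OF n] by (simp; blast)
qed

end
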